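(* Let $k\ge 3$ be an integer and let $D$ be an oriented graph on $n\ge 1$ vertices such that for every vertex $x$, the in-neighbourhood $x^-$ induces a tournament, and such that $D$ has no directed cycle of length at most $k$. Then $D$ has a vertex of out-degree strictly less than $n/k$.
   Context: Digraphs are finite, no loops, no parallel arcs; an oriented graph has no digon. $x^-$ is the in-neighbourhood of $x$; the out-degree of $x$ is the number of out-neighbours. *)

theory Defs
  imports Complex_Main
begin

text \<open>A digraph is given by a vertex set V and an arc set A (pairs (u,v) meaning u -> v).\<close>

definition oriented_graph :: "'a set \<Rightarrow> ('a \<times> 'a) set \<Rightarrow> bool" where
  "oriented_graph V A \<longleftrightarrow> finite V \<and> A \<subseteq> V \<times> V
     \<and> (\<forall>x. (x, x) \<notin> A) \<and> (\<forall>x y. (x, y) \<in> A \<longrightarrow> (y, x) \<notin> A)"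

definition in_nbhd :: "('a \<times> 'a) set \<Rightarrow> 'a \<Rightarrow> 'a set" where
  "in_nbhd A x = {y. (y, x) \<in> A}"

definition out_nbhd :: "('a \<times> 'a) set \<Rightarrow> 'a \<Rightarrow> 'a set" where
  "out_nbhd A x = {y. (x, y) \<in> A}"

definition out_degree :: "('a \<times> 'a) set \<Rightarrow> 'a \<Rightarrow> nat" where
  "out_degree A x = card (out_nbhd A x)"

definition induces_tournament :: "('a \<times> 'a) set \<Rightarrow> 'a set \<Rightarrow> bool" where
  "induces_tournament A S \<longleftrightarrow>
     (\<forall>x\<in>S. \<forall>y\<in>S. x \<noteq> y \<longrightarrow> (x, y) \<in> A \<or> (y, x) \<in> A)"

definition has_dicycle_of_length :: "'a set \<Rightarrow> ('a \<times> 'a) set \<Rightarrow> nat \<Rightarrow> bool" where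
  "has_dicycle_of_length V A l \<longleftrightarrow> l \<ge> 2 \<and>
     (\<exists>c :: nat \<Rightarrow> 'a. inj_on c {..<l} \<and> c ` {..<l} \<subseteq> V \<and>
        (\<forall>i<l. (c i, c (Suc i mod l)) \<in> A))"

end

theory Submission
  imports Defs
begin

text \<open>Induction on the number of vertices. If some vertex has no in-neighbour, delete it.
  Otherwise every in-neighbourhood is a tournament without directed triangles, hence
  transitive, and has a source. Starting anywhere and repeatedly stepping to the source
  of the current in-neighbourhood gives a backward path \<open>x\<^sub>0 \<leftarrow> x\<^sub>1 \<leftarrow> \<dots>\<close> whose
  first \<open>k\<close> vertices are distinct, and no vertex \<open>w\<close> has two out-neighbours
  \<open>x\<^sub>i, x\<^sub>j\<close> with \<open>i < j < k\<close>: as \<open>w\<close> is dominated by \<open>x\<^sub>i\<^sub>+\<^sub>1\<close> or equal to it,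
  \<open>x\<^sub>j \<rightarrow> \<dots> \<rightarrow> x\<^sub>i\<^sub>+\<^sub>1 (\<rightarrow> w) \<rightarrow> x\<^sub>j\<close> would be a closed walk of length at most \<open>k\<close>.
  Deleting these \<open>k\<close> vertices lowers \<open>n/k\<close> by one and each out-degree by at most one.\<close>

lemma in_nbhd_subset: "A \<subseteq> V \<times> V \<Longrightarrow> in_nbhd A x \<subseteq> V"
  by (auto simp: in_nbhd_def)

lemma out_nbhd_subset: "A \<subseteq> V \<times> V \<Longrightarrow> out_nbhd A x \<subseteq> V"
  by (auto simp: out_nbhd_def)

lemma dicycle_of_closed_fun_walk:
  assumes AV: "A \<subseteq> V \<times> V" and irrefl: "\<forall>x. (x, x) \<notin> A"
  shows "1 \<le> L \<Longrightarrow> c L = c 0 \<Longrightarrow> \<forall>m<L. (c m, c (Suc m)) \<in> A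
    \<Longrightarrow> \<exists>l\<le>L. has_dicycle_of_length V A l"
proof (induction L arbitrary: c rule: less_induct)
  case (less L)
  show ?case
  proof (cases "inj_on c {..<L}")
    case True
    have "L \<noteq> 1" using less.prems irrefl by auto
    moreover have "(c i, c (Suc i mod L)) \<in> A" if "i < L" for i
    proof (cases "Suc i = L")
      case True
      then show ?thesis using less.prems that by (metis mod_self)
    qed (use less.prems that in simp)
    moreover have "c ` {..<L} \<subseteq> V" using less.prems AV by force
    ultimately have "has_dicycle_of_length V A L"
      using True less.prems(1) unfolding has_dicycle_of_length_def by auto
    then show ?thesis by auto
  next
    case False
    then obtain i j where ij: "i < j" "j < L" "c i = c j"
      unfolding inj_on_def by (metis lessThan_iff linorder_neqE_nat)
    have "\<exists>l\<le>j - i. has_dicycle_of_length V A l"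
      by (rule less.IH[of "j - i" "\<lambda>m. c (i + m)"]) (use ij less.prems in auto)
    then show ?thesis using ij by (meson diff_le_self le_trans less_imp_le)
  qed
qed

lemma dicycle_of_closed_walk:
  assumes "A \<subseteq> V \<times> V" "\<forall>x. (x, x) \<notin> A" "(a, a) \<in> A ^^ L" "1 \<le> L"
  shows "\<exists>l\<le>L. has_dicycle_of_length V A l"
  using assms dicycle_of_closed_fun_walk[OF assms(1,2)] by (auto simp: relpow_fun_conv)

lemma no_short_closed_walk:
  assumes og: "oriented_graph V A"
    and nocyc: "\<forall>l. l \<le> k \<longrightarrow> \<not> has_dicycle_of_length V A l"
  shows "\<forall>a L. 1 \<le> L \<longrightarrow> L \<le> k \<longrightarrow> (a, a) \<notin> A ^^ L"
proof (intro allI impI notI)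
  fix a L assume L: "1 \<le> L" "L \<le> k" and walk: "(a, a) \<in> A ^^ L"
  have AV: "A \<subseteq> V \<times> V" and irrefl: "\<forall>x. (x, x) \<notin> A"
    using og by (auto simp: oriented_graph_def)
  obtain l where "l \<le> L" "has_dicycle_of_length V A l"
    using dicycle_of_closed_walk[OF AV irrefl walk L(1)] by blast
  then show False using nocyc L(2) by auto
qed

lemma no_directed_triangle:
  assumes "\<forall>a L. 1 \<le> L \<longrightarrow> L \<le> k \<longrightarrow> (a, a) \<notin> A ^^ L" "3 \<le> k"
  shows "\<forall>a b c. (a, b) \<in> A \<longrightarrow> (b, c) \<in> A \<longrightarrow> (c, a) \<notin> A"
proof (intro allI impI notI)
  fix a b c assume "(a, b) \<in> A" "(b, c) \<in> A" "(c, a) \<in> A"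
  then have "(a, a) \<in> A ^^ 3" by (metis numeral_3_eq_3 relpow_0_I relpow_Suc_I2)
  then show False using assms by auto
qed

lemma tournament_has_source:
  assumes "finite S" "S \<noteq> {}" and tour: "induces_tournament A S"
    and no_triangle: "\<forall>a b c. (a, b) \<in> A \<longrightarrow> (b, c) \<in> A \<longrightarrow> (c, a) \<notin> A"
  shows "\<exists>a\<in>S. \<forall>b\<in>S. b \<noteq> a \<longrightarrow> (a, b) \<in> A"
proof -
  define d where "d a = card (out_nbhd A a \<inter> S)" for a
  have "Max (d ` S) \<in> d ` S" using assms(1,2) by simp
  then obtain a where a: "a \<in> S" "d a = Max (d ` S)" by auto
  have max: "d b \<le> d a" if "b \<in> S" for b
    using a(2) assms(1) that by (simp add: Max_ge)
  have "(a, b) \<in> A" if b: "b \<in> S" "b \<noteq> a" for b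
  proof (rule ccontr)
    assume "(a, b) \<notin> A"
    then have ba: "(b, a) \<in> A" using tour a b by (auto simp: induces_tournament_def)
    have sub: "out_nbhd A a \<inter> S \<subseteq> out_nbhd A b \<inter> S"
    proof
      fix c assume c: "c \<in> out_nbhd A a \<inter> S"
      then have "(a, c) \<in> A" "c \<in> S" by (auto simp: out_nbhd_def)
      moreover from this have "c \<noteq> b" "(c, b) \<notin> A"
        using \<open>(a, b) \<notin> A\<close> no_triangle[rule_format, of b a c] ba by auto
      ultimately have "(b, c) \<in> A" using tour b by (auto simp: induces_tournament_def)
      then show "c \<in> out_nbhd A b \<inter> S" using \<open>c \<in> S\<close> by (simp add: out_nbhd_def)
    qed
    have "a \<in> out_nbhd A b \<inter> S - out_nbhd A a"
      using ba a(1) no_triangle[rule_format, of a a a] by (auto simp: out_nbhd_def)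
    then have "out_nbhd A a \<inter> S \<subset> out_nbhd A b \<inter> S" using sub by blast
    then have "d a < d b" unfolding d_def by (simp add: assms(1) psubset_card_mono)
    then show False using max[OF b(1)] by simp
  qed
  then show ?thesis using a by blast
qed

lemma backward_chain_relpow:
  assumes "\<forall>m. (x (Suc m), x m) \<in> A"
  shows "(x (i + L), x i) \<in> A ^^ L"
proof (induction L)
  case (Suc L)
  then show ?case using assms by (metis add_Suc_right relpow_Suc_I2)
qed simp

lemma inj_on_backward_chain:
  assumes no_walk: "\<forall>a L. 1 \<le> L \<longrightarrow> L \<le> k \<longrightarrow> (a, a) \<notin> A ^^ L"
    and back_arcs: "\<forall>m. (x (Suc m), x m) \<in> A"
  shows "inj_on x {..k}"
proof (rule linorder_inj_onI')
  fix i j assume "i \<in> {..k}" "j \<in> {..k}" "i < j"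
  moreover have "(x (i + (j - i)), x i) \<in> A ^^ (j - i)"
    using backward_chain_relpow[OF back_arcs] .
  ultimately show "x i \<noteq> x j" using no_walk[rule_format, where a = "x j" and L = "j - i"] by auto
qed

lemma card_out_nbhd_inter_dominating_chain:
  assumes no_walk: "\<forall>a L. 1 \<le> L \<longrightarrow> L \<le> k \<longrightarrow> (a, a) \<notin> A ^^ L"
    and back_arcs: "\<forall>m. (x (Suc m), x m) \<in> A"
    and dominating: "\<forall>m b. (b, x m) \<in> A \<longrightarrow> b \<noteq> x (Suc m) \<longrightarrow> (x (Suc m), b) \<in> A"
  shows "card (out_nbhd A w \<inter> x ` {..<k}) \<le> 1"
proof -
  have False if "i < j" "j < k" "(w, x i) \<in> A" "(w, x j) \<in> A" for i j
  proof -
    note ij = that(1,2) and w = that(3,4)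
    have path_back: "(x j, x (Suc i)) \<in> A ^^ (j - Suc i)"
      using backward_chain_relpow[OF back_arcs, of "Suc i" "j - Suc i"] ij by simp
    \<comment> \<open>\<open>w\<close> is \<open>x\<^sub>i\<^sub>+\<^sub>1\<close> itself or one of its out-neighbours\<close>
    obtain L where L: "L \<in> {1, 2}" "(x (Suc i), x j) \<in> A ^^ L"
    proof (cases "w = x (Suc i)")
      case False
      then have "(x (Suc i), w) \<in> A" using dominating w by blast
      then have "(x (Suc i), x j) \<in> A ^^ 2"
        using w(2) by (metis numeral_2_eq_2 relpow_0_I relpow_Suc_I2)
      then show thesis using that[of 2] by simp
    qed (use that[of 1] w in simp)
    then have "(x j, x j) \<in> A ^^ (j - Suc i + L)"
      unfolding relpow_add using path_back by blast
    moreover have "1 \<le> j - Suc i + L" "j - Suc i + L \<le> k" using L(1) ij by auto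
    ultimately show False using no_walk by blast
  qed
  then have "\<forall>a\<in>out_nbhd A w \<inter> x ` {..<k}. \<forall>b\<in>out_nbhd A w \<inter> x ` {..<k}. a = b"
    unfolding out_nbhd_def by (auto, metis linorder_neqE_nat)
  then show ?thesis by (simp add: card_le_Suc0_iff_eq)
qed

lemma dominating_backward_chain_exists:
  assumes og: "oriented_graph V A" and tour: "\<forall>z\<in>V. induces_tournament A (in_nbhd A z)"
    and no_triangle: "\<forall>a b c. (a, b) \<in> A \<longrightarrow> (b, c) \<in> A \<longrightarrow> (c, a) \<notin> A"
    and has_in: "\<forall>z\<in>V. in_nbhd A z \<noteq> {}" and v: "v \<in> V"
  obtains x where "\<forall>m. x m \<in> V" "\<forall>m. (x (Suc m), x m) \<in> A"
    "\<forall>m b. (b, x m) \<in> A \<longrightarrow> b \<noteq> x (Suc m) \<longrightarrow> (x (Suc m), b) \<in> A"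
proof -
  have fin: "finite V" and AV: "A \<subseteq> V \<times> V" using og by (auto simp: oriented_graph_def)
  have "\<exists>a\<in>in_nbhd A z. \<forall>b\<in>in_nbhd A z. b \<noteq> a \<longrightarrow> (a, b) \<in> A" if "z \<in> V" for z
    using tournament_has_source[OF finite_subset[OF in_nbhd_subset[OF AV] fin]] tour has_in
      no_triangle that by blast
  then obtain s where s: "\<And>z. z \<in> V \<Longrightarrow>
      s z \<in> in_nbhd A z \<and> (\<forall>b\<in>in_nbhd A z. b \<noteq> s z \<longrightarrow> (s z, b) \<in> A)"
    by metis
  define x where "x m = (s ^^ m) v" for m
  have x_Suc: "x (Suc m) = s (x m)" for m by (simp add: x_def)
  have xV: "x m \<in> V" for m
    using s in_nbhd_subset[OF AV] v by (induction m) (auto simp: x_def)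
  show thesis
    by (rule that[of x]) (use s xV in \<open>auto simp: x_Suc in_nbhd_def\<close>)
qed

definition induced :: "('a \<times> 'a) set \<Rightarrow> 'a set \<Rightarrow> ('a \<times> 'a) set" where
  "induced A S = A \<inter> S \<times> S"

lemma oriented_graph_induced:
  "oriented_graph V A \<Longrightarrow> S \<subseteq> V \<Longrightarrow> oriented_graph S (induced A S)"
  by (auto simp: oriented_graph_def induced_def intro: finite_subset)

lemma induces_tournament_in_nbhd_induced:
  "induces_tournament A (in_nbhd A x) \<Longrightarrow> induces_tournament (induced A S) (in_nbhd (induced A S) x)"
  by (auto simp: induces_tournament_def in_nbhd_def induced_def)

lemma has_dicycle_of_length_induced:
  "has_dicycle_of_length S (induced A S) l \<Longrightarrow> S \<subseteq> V \<Longrightarrow> has_dicycle_of_length V A l"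
  unfolding has_dicycle_of_length_def induced_def by blast

lemma out_nbhd_induced: "w \<in> S \<Longrightarrow> out_nbhd (induced A S) w = out_nbhd A w \<inter> S"
  by (auto simp: out_nbhd_def induced_def)

lemma card_ge_2_if_arc: "oriented_graph V A \<Longrightarrow> (x, y) \<in> A \<Longrightarrow> 2 \<le> card V"
  unfolding oriented_graph_def
  by (metis card_2_iff card_mono empty_subsetI insert_subset mem_Sigma_iff subset_iff)

lemma out_degree_le_induced:
  assumes "finite (out_nbhd A w)" "w \<in> S"
  shows "out_degree A w \<le> out_degree (induced A S) w + card (out_nbhd A w - S)"
proof -
  have "out_nbhd A w = out_nbhd (induced A S) w \<union> (out_nbhd A w - S)"
    using assms(2) by (auto simp: out_nbhd_induced)
  then show ?thesis unfolding out_degree_def by (metis card_Un_le)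
qed

lemma out_degree_bound_from_induced:
  assumes og: "oriented_graph V A" and "X \<subseteq> V" "0 < k" and w: "w \<in> V - X"
    and bound: "real (out_degree (induced A (V - X)) w) < real (card (V - X)) / real k"
    and few: "k * card (out_nbhd A w \<inter> X) \<le> card X"
  shows "real (out_degree A w) < real (card V) / real k"
proof -
  have fin: "finite V" and AV: "A \<subseteq> V \<times> V" using og by (auto simp: oriented_graph_def)
  have "out_nbhd A w - (V - X) = out_nbhd A w \<inter> X" using out_nbhd_subset[OF AV] by blast
  then have "out_degree A w \<le> out_degree (induced A (V - X)) w + card (out_nbhd A w \<inter> X)"
    using out_degree_le_induced[OF finite_subset[OF out_nbhd_subset[OF AV] fin] w] by simp
  moreover have "real (card (out_nbhd A w \<inter> X)) \<le> real (card X) / real k"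
    using few \<open>0 < k\<close> by (simp add: field_simps flip: of_nat_mult)
  moreover have "real (card (V - X)) = real (card V) - real (card X)"
    using \<open>X \<subseteq> V\<close> fin by (simp add: card_Diff_subset finite_subset of_nat_diff card_mono)
  ultimately show ?thesis using bound by (simp add: diff_divide_distrib)
qed

lemma deletable_vertex_set_exists:
  assumes k3: "3 \<le> k" and og: "oriented_graph V A"
    and tour: "\<forall>x\<in>V. induces_tournament A (in_nbhd A x)"
    and nocyc: "\<forall>l. l \<le> k \<longrightarrow> \<not> has_dicycle_of_length V A l"
    and two: "2 \<le> card V"
  obtains X where "X \<subseteq> V" "X \<noteq> {}" "X \<noteq> V" "\<And>w. k * card (out_nbhd A w \<inter> X) \<le> card X"
proof (cases "\<exists>z\<in>V. in_nbhd A z = {}")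
  case True
  then obtain z where z: "z \<in> V" "in_nbhd A z = {}" by blast
  have "out_nbhd A w \<inter> {z} = {}" for w using z(2) by (auto simp: in_nbhd_def out_nbhd_def)
  moreover have "{z} \<noteq> V" using two by auto
  ultimately show thesis using that[of "{z}"] z(1) by auto
next
  case False
  then have has_in: "\<forall>z\<in>V. in_nbhd A z \<noteq> {}" by blast
  have no_walk: "\<forall>a L. 1 \<le> L \<longrightarrow> L \<le> k \<longrightarrow> (a, a) \<notin> A ^^ L"
    using no_short_closed_walk[OF og nocyc] .
  have "V \<noteq> {}" using two by auto
  then obtain v where v: "v \<in> V" by blast
  obtain x where xV: "\<forall>m. x m \<in> V" and back_arcs: "\<forall>m. (x (Suc m), x m) \<in> A"
    and dominating: "\<forall>m b. (b, x m) \<in> A \<longrightarrow> b \<noteq> x (Suc m) \<longrightarrow> (x (Suc m), b) \<in> A"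
    by (rule dominating_backward_chain_exists[OF og tour no_directed_triangle[OF no_walk k3] has_in v])
  define X where "X = x ` {..<k}"
  have inj: "inj_on x {..k}" using inj_on_backward_chain[OF no_walk back_arcs] .
  have "inj_on x {..<k}" using inj by (rule inj_on_subset) auto
  then have "card X = k" unfolding X_def by (simp add: card_image)
  have "x k \<notin> X" using inj unfolding X_def inj_on_def by fastforce
  then have "X \<noteq> V" using xV by auto
  moreover have "X \<subseteq> V" "X \<noteq> {}" using xV k3 by (auto simp: X_def lessThan_empty_iff)
  moreover have "k * card (out_nbhd A w \<inter> X) \<le> card X" for w
    using mult_le_mono2[OF card_out_nbhd_inter_dominating_chain[OF no_walk back_arcs dominating], of k w]
      \<open>card X = k\<close> by (simp add: X_def)
  ultimately show thesis using that by blast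
qed

theorem theorem3p6:
  fixes V :: "'a set" and A :: "('a \<times> 'a) set" and k :: nat
  assumes "k \<ge> 3"
    and "oriented_graph V A"
    and "card V \<ge> 1"
    and "\<forall>x\<in>V. induces_tournament A (in_nbhd A x)"
    and "\<forall>l. l \<le> k \<longrightarrow> \<not> has_dicycle_of_length V A l"
  shows "\<exists>x\<in>V. real (out_degree A x) < real (card V) / real k"
  using assms
proof (induction "card V" arbitrary: V A rule: less_induct)
  case less
  note k3 = less.prems(1) and og = less.prems(2)
  show ?case
  proof (cases "\<exists>x\<in>V. out_degree A x = 0")
    case True
    then obtain x where "x \<in> V" "out_degree A x = 0" by blast
    then show ?thesis using less.prems(3) k3 by (auto intro!: bexI[of _ x] divide_pos_pos)
  next
    case False
    obtain x where "x \<in> V" using less.prems(3) by fastforce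
    then have "out_nbhd A x \<noteq> {}" using False by (auto simp: out_degree_def)
    then obtain y where "(x, y) \<in> A" by (auto simp: out_nbhd_def)
    then obtain X where X: "X \<subseteq> V" "X \<noteq> {}" "X \<noteq> V" "\<And>w. k * card (out_nbhd A w \<inter> X) \<le> card X"
      using deletable_vertex_set_exists[OF k3 og less.prems(4,5) card_ge_2_if_arc[OF og]] by metis
    have fin: "finite V" using og by (simp add: oriented_graph_def)
    have smaller: "card (V - X) < card V" using X(1,2) by (intro psubset_card_mono[OF fin]) blast
    have nonempty: "1 \<le> card (V - X)" using X(1,3) fin by (simp add: Suc_le_eq card_gt_0_iff)
    have tour: "\<forall>z\<in>V - X. induces_tournament (induced A (V - X)) (in_nbhd (induced A (V - X)) z)"
      using less.prems(4) by (simp add: induces_tournament_in_nbhd_induced)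
    have nocyc: "\<forall>l. l \<le> k \<longrightarrow> \<not> has_dicycle_of_length (V - X) (induced A (V - X)) l"
      using less.prems(5) has_dicycle_of_length_induced[OF _ Diff_subset] by blast
    obtain w where w: "w \<in> V - X"
      "real (out_degree (induced A (V - X)) w) < real (card (V - X)) / real k"
      using less.hyps[OF smaller k3 oriented_graph_induced[OF og Diff_subset] nonempty tour nocyc]
      by blast
    have "real (out_degree A w) < real (card V) / real k"
      using out_degree_bound_from_induced[OF og X(1) _ w X(4)] k3 by simp
    then show ?thesis using w(1) by blast
  qed
qed

end
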